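(* Let $m\ge1$ be an integer and write $s_n=s_n^{(m+1,m+2)}$. Then for all $n\ge0$, \[ s_n^2=\delta_{n,0}+s_{n-m-1}^2+s_{n-m-2}^2+2\sum_{l=2m+3}^n P_{l-2m-3}^{\{-2,m-1,m\}}s_{n-l}^2 . \]
   Context: For positive integers $p<q$, $s_n^{(p,q)}$ is defined by $s_n^{(p,q)}=\delta_{0,n}+s_{n-p}^{(p,q)}+s_{n-q}^{(p,q)}$ for $n\ge0$ and $s_n^{(p,q)}=0$ for $n<0$. $\delta_{i,j}$ is $1$ if $i=j$ and $0$ otherwise. For a finite set $W$ of integers, $P_n^W$ is the number of permutations $\pi$ of $\{1,\dots,n\}$ with $\pi(i)-i\in W$ for all $i$ (the permanent of the $n\times n$ $(0,1)$ Toeplitz matrix whose $(i,j)$ entry is $1$ iff $j-i\in W$), with $P_0^W=1$. Empty sums are $0$. *)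

theory Defs
  imports Main "HOL-Combinatorics.Permutations"
begin

function sseq :: "nat \<Rightarrow> nat \<Rightarrow> int \<Rightarrow> nat" where
  "sseq p q n = (if n < 0 \<or> p = 0 \<or> q = 0 then 0
     else (if n = 0 then 1 else 0) + sseq p q (n - int p) + sseq p q (n - int q))"
  by pat_completeness auto
termination
  by (relation "measure (\<lambda>(p, q, n). nat (n + 1))") auto

definition Pperm :: "int set \<Rightarrow> nat \<Rightarrow> nat" where
  "Pperm W n = card {\<pi>. \<pi> permutes {1..n} \<and> (\<forall>i\<in>{1..n}. int (\<pi> i) - int i \<in> W)}"

end

theory Submission
  imports Defs
begin

(*
  Write s = s^(p,p+1). Expanding the factor with the smaller index by the recurrence turns a
  product s_(N-x) s_(N-y) with x < y <= x + p into a square (if y = x + p) and products of the same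
  kind for the pairs (y, x + p) and (y, x + p + 1). Unrolling, s_(N-x) s_(N-y) is a sum of squares
  s_(N-T-p-1)^2, one for each strictly increasing list x, y, ..., T, T + 1 in which every entry
  exceeds the entry two places before it by p or p + 1; chain_count counts these lists.

  For p = m + 1, the lists starting with 1, 2 and ending with n + 1, n + 2 are in bijection with
  the permutations counted by P_n^{-2,m-1,m}: apart from n + 1 and n + 2, the entries are the
  points i with pi(i) <> i - 2, and each is sent to the entry two places later, minus 2. The
  theorem is the squared recurrence, whose cross term 2 s_(n-m-1) s_(n-m-2) is expanded this way
  and shifted from the start (m + 1, m + 2) to (1, 2).
*)

lemma sseq_negative: "n < 0 \<Longrightarrow> sseq p q n = 0"
  by (subst sseq.simps) simp

lemma sseq_unfold: "0 \<le> n \<Longrightarrow> 0 < p \<Longrightarrow> 0 < q \<Longrightarrow>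
  sseq p q n = (if n = 0 then 1 else 0) + sseq p q (n - int p) + sseq p q (n - int q)"
  by (subst sseq.simps) simp

lemma sseq_square_unfold:
  assumes "0 < p" "0 < q"
  shows "(sseq p q (int n))^2 = (if n = 0 then 1 else 0)
    + (sseq p q (int n - int p))^2 + (sseq p q (int n - int q))^2
    + 2 * (sseq p q (int n - int p) * sseq p q (int n - int q))"
proof -
  have "n = 0 \<Longrightarrow> sseq p q (int n - int p) = 0 \<and> sseq p q (int n - int q) = 0"
    using assms by (simp add: sseq_negative)
  then show ?thesis
    using sseq_unfold[of "int n" p q] assms
    by (cases "n = 0") (simp_all add: power2_eq_square algebra_simps)
qed

declare sseq.simps [simp del]

function chain_count :: "nat \<Rightarrow> nat \<Rightarrow> nat \<Rightarrow> nat \<Rightarrow> nat \<Rightarrow> nat" where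
  "chain_count p q x y T = (if y \<le> x \<or> T < x then 0 else
     (if x = T \<and> y = T + 1 then 1 else 0)
     + (if y < x + p then chain_count p q y (x + p) T else 0)
     + (if y < x + q then chain_count p q y (x + q) T else 0))"
  by pat_completeness auto
termination
  by (relation "measure (\<lambda>(p, q, x, y, T). T + 1 - x)") auto

declare chain_count.simps [simp del]

lemma chain_count_eq_0: "T < x \<Longrightarrow> chain_count p q x y T = 0"
  by (subst chain_count.simps) simp

lemma chain_count_unfold:
  assumes "x < y"
  shows "chain_count p q x y T =
     (if x = T \<and> y = T + 1 then 1 else 0)
     + (if y < x + p then chain_count p q y (x + p) T else 0)
     + (if y < x + q then chain_count p q y (x + q) T else 0)"
proof (cases "T < x")
  case True
  then show ?thesis using assms by (simp add: chain_count_eq_0)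
next
  case False
  then show ?thesis using assms by (subst chain_count.simps) simp
qed

lemma chain_count_eq_0_end: "T + 1 < y \<Longrightarrow> chain_count p q x y T = 0"
proof (induction p q x y T rule: chain_count.induct)
  case (1 p q x y T)
  then show ?case by (subst chain_count.simps) auto
qed

lemma chain_count_shift: "chain_count p q (x + c) (y + c) (T + c) = chain_count p q x y T"
proof (induction p q x y T rule: chain_count.induct)
  case (1 p q x y T)
  then show ?case
    by (subst (1 2) chain_count.simps) (simp add: algebra_simps)
qed

lemma sum_chain_count_unfold:
  fixes w :: "nat \<Rightarrow> nat"
  assumes "x < y" "x \<le> N"
  shows "(\<Sum>T\<le>N. chain_count p q x y T * w T) =
    (if y = x + 1 then w x else 0)
    + (if y < x + p then (\<Sum>T\<le>N. chain_count p q y (x + p) T * w T) else 0)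
    + (if y < x + q then (\<Sum>T\<le>N. chain_count p q y (x + q) T * w T) else 0)"
proof -
  have "(\<Sum>T\<le>N. (if x = T \<and> y = T + 1 then 1 else 0) * w T)
      = (\<Sum>T\<le>N. if T = x then (if y = x + 1 then w x else 0) else 0)"
    by (rule sum.cong) auto
  also have "\<dots> = (if y = x + 1 then w x else 0)"
    using assms(2) by simp
  finally show ?thesis
    using assms(1)
    by (simp add: chain_count_unfold[of x y] sum.distrib algebra_simps sum_distrib_left
        if_distrib [of "\<lambda>c. c * _"] cong: if_cong)
qed

lemma sseq_product_expansion:
  assumes "0 < p" "x < y" "y \<le> x + p"
  shows "sseq p (p+1) (int N - int x) * sseq p (p+1) (int N - int y) =
    (if y = x + p then (sseq p (p+1) (int N - int y))^2 else 0)
    + (\<Sum>T\<le>N. chain_count p (p+1) x y T * (sseq p (p+1) (int N - int (T + (p+1))))^2)"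
  using assms(2,3)
proof (induction "N + 1 - x" arbitrary: x y rule: less_induct)
  case less
  let ?s = "\<lambda>k. sseq p (p+1) (int N - int k)"
  let ?w = "\<lambda>T. (?s (T + (p+1)))^2"
  show ?case
  proof (cases "N < y")
    case True
    have "chain_count p (p+1) x y T * ?w T = 0" for T
      using True chain_count_eq_0_end[of T y p "p+1" x]
      by (cases "T + 1 < y") (auto simp: sseq_negative)
    then show ?thesis using True by (simp add: sseq_negative)
  next
    case False
    have "?s x = ?s (x + p) + ?s (x + (p+1))"
      using sseq_unfold[of "int N - int x" p "p+1"] False less.prems \<open>0 < p\<close>
      by (simp add: algebra_simps)
    then have "?s x * ?s y = ?s (x + p) * ?s y + ?s (x + (p+1)) * ?s y"
      by (simp add: distrib_right)
    also have "?s (x + p) * ?s y = (if y = x + p then (?s y)^2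
        else (\<Sum>T\<le>N. chain_count p (p+1) y (x + p) T * ?w T))"
      using less.hyps[of y "x + p"] less.prems False
      by (auto simp: power2_eq_square mult.commute)
    also have "?s (x + (p+1)) * ?s y = (if y = x + 1 then ?w x else 0)
        + (\<Sum>T\<le>N. chain_count p (p+1) y (x + (p+1)) T * ?w T)"
      using less.hyps[of y "x + (p+1)"] less.prems False
      by (auto simp: mult.commute)
    finally show ?thesis
      using sum_chain_count_unfold[of x y N p "p+1" ?w] less.prems False
      by auto
  qed
qed

definition is_chain :: "nat \<Rightarrow> nat \<Rightarrow> nat \<Rightarrow> nat list \<Rightarrow> bool" where
  "is_chain p q T l \<longleftrightarrow> sorted_wrt (<) l \<and> 2 \<le> length l
     \<and> (\<forall>k < length l - 2. l!(k+2) = l!k + p \<or> l!(k+2) = l!k + q)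
     \<and> l!(length l - 2) = T \<and> l!(length l - 1) = T + 1"

lemma is_chain_two: "is_chain p q T [x, y] \<longleftrightarrow> x = T \<and> y = T + 1"
  unfolding is_chain_def by auto

lemma is_chain_Cons: "is_chain p q T (x # y # z # r) \<longleftrightarrow>
   x < y \<and> (z = x + p \<or> z = x + q) \<and> is_chain p q T (y # z # r)"
proof -
  have sorted: "sorted_wrt (<) (x # y # z # r) \<longleftrightarrow> x < y \<and> sorted_wrt (<) (y # z # r)"
    using sorted_wrt2[OF transp_on_less] by blast
  have steps: "(\<forall>k < length (x # y # z # r) - 2. P k) \<longleftrightarrow>
      P 0 \<and> (\<forall>k < length (y # z # r) - 2. P (Suc k))" for P
    using All_less_Suc2 by simp
  show ?thesis
    unfolding is_chain_def sorted steps by auto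
qed

lemma is_chain_hd_le:
  assumes "is_chain p q T (x # r)"
  shows "x \<le> T"
proof -
  have "sorted (x # r)" "2 \<le> length (x # r)" "(x # r)!(length (x # r) - 2) = T"
    using assms unfolding is_chain_def by (auto simp: strict_sorted_iff)
  then show ?thesis
    using sorted_nth_mono[of "x # r" 0 "length (x # r) - 2"] by simp
qed

lemma is_chain_less: "is_chain p q T (x # y # r) \<Longrightarrow> x < y"
  unfolding is_chain_def by simp

definition chain_tails :: "nat \<Rightarrow> nat \<Rightarrow> nat \<Rightarrow> nat \<Rightarrow> nat \<Rightarrow> nat list set" where
  "chain_tails p q x y T = {r. is_chain p q T (x # y # r)}"

lemma chain_tails_unfold: "chain_tails p q x y T =
   (if x = T \<and> y = T + 1 then {[]} else {})
   \<union> (if x < y \<and> y < x + p then Cons (x + p) ` chain_tails p q y (x + p) T else {})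
   \<union> (if x < y \<and> y < x + q then Cons (x + q) ` chain_tails p q y (x + q) T else {})"
proof (intro set_eqI)
  fix r
  show "r \<in> chain_tails p q x y T \<longleftrightarrow> r \<in> (if x = T \<and> y = T + 1 then {[]} else {})
   \<union> (if x < y \<and> y < x + p then Cons (x + p) ` chain_tails p q y (x + p) T else {})
   \<union> (if x < y \<and> y < x + q then Cons (x + q) ` chain_tails p q y (x + q) T else {})"
  proof (cases r)
    case Nil
    then show ?thesis by (auto simp: chain_tails_def is_chain_two)
  next
    case (Cons z r')
    then show ?thesis
      by (auto simp: chain_tails_def is_chain_Cons dest: is_chain_less)
  qed
qed

lemma card_chain_tails:
  assumes "p \<noteq> q"
  shows "card (chain_tails p q x y T) = chain_count p q x y T"
proof -
  have "p \<noteq> q \<Longrightarrow>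
    finite (chain_tails p q x y T) \<and> card (chain_tails p q x y T) = chain_count p q x y T"
  proof (induction p q x y T rule: chain_count.induct)
    case (1 p q x y T)
    show ?case
    proof (cases "y \<le> x \<or> T < x")
      case True
      then have "chain_tails p q x y T = {}"
        by (auto simp: chain_tails_def dest: is_chain_less is_chain_hd_le)
      then show ?thesis using True by (subst chain_count.simps) simp
    next
      case False
      let ?A = "if x = T \<and> y = T + 1 then {[]} else {}"
      let ?B = "\<lambda>d. if y < x + d then Cons (x + d) ` chain_tails p q y (x + d) T else {}"
      have fin_card:
        "finite (?B d) \<and> card (?B d) = (if y < x + d then chain_count p q y (x + d) T else 0)"
        if "y < x + d \<Longrightarrow> finite (chain_tails p q y (x + d) T)
              \<and> card (chain_tails p q y (x + d) T) = chain_count p q y (x + d) T"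
        for d
        using that by (auto simp: card_image)
      have "?A \<inter> ?B p = {}" "?A \<inter> ?B q = {}" "?B p \<inter> ?B q = {}"
        using "1.prems" by auto
      moreover have "chain_tails p q x y T = ?A \<union> ?B p \<union> ?B q"
        using False chain_tails_unfold[of p q x y T] by auto
      ultimately show ?thesis
        using False "1.IH" "1.prems" fin_card[of p] fin_card[of q]
        by (subst chain_count.simps) (simp add: card_Un_disjoint Int_Un_distrib2)
    qed
  qed
  then show ?thesis using assms by blast
qed

fun skip_two :: "nat list \<Rightarrow> nat \<Rightarrow> nat" where
  "skip_two (x # y # z # r) = (skip_two (y # z # r))(x := z - 2)"
| "skip_two _ = (\<lambda>i. i - 2)"

lemma skip_two_nth: "distinct l \<Longrightarrow> k < length l - 2 \<Longrightarrow> skip_two l (l!k) = l!(k+2) - 2"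
proof (induction l arbitrary: k rule: skip_two.induct)
  case (1 x y z r)
  then show ?case
    by (cases k) (auto simp: nth_Cons' dest: nth_mem)
qed auto

lemma skip_two_notin: "i \<notin> set l \<Longrightarrow> skip_two l i = i - 2"
  by (induction l rule: skip_two.induct) auto

definition chain_perm :: "nat \<Rightarrow> nat list \<Rightarrow> nat \<Rightarrow> nat" where
  "chain_perm n l i = (if i \<in> {1..n} then skip_two l i else i)"

definition displacement_perms :: "int set \<Rightarrow> nat \<Rightarrow> (nat \<Rightarrow> nat) set" where
  "displacement_perms W n = {\<pi>. \<pi> permutes {1..n} \<and> (\<forall>i\<in>{1..n}. int (\<pi> i) - int i \<in> W)}"

definition advancing :: "nat \<Rightarrow> (nat \<Rightarrow> nat) \<Rightarrow> nat set" where
  "advancing n \<pi> = {i \<in> {1..n}. \<pi> i + 2 \<noteq> i}"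

definition perm_chain :: "nat \<Rightarrow> (nat \<Rightarrow> nat) \<Rightarrow> nat list" where
  "perm_chain n \<pi> = sorted_list_of_set (advancing n \<pi>) @ [n + 1, n + 2]"

lemma finite_advancing: "finite (advancing n \<pi>)"
  by (simp add: advancing_def)

lemma sorted_perm_chain: "sorted_wrt (<) (perm_chain n \<pi>)"
  by (auto simp: perm_chain_def advancing_def sorted_wrt_append)

context
  fixes m n :: nat and L :: "nat list"
  assumes m_pos: "1 \<le> m"
    and chain: "is_chain (m+1) (m+2) (n+1) L"
    and chain_start: "L!0 = 1" "L!1 = 2"
begin

lemma chain_sorted: "sorted_wrt (<) L"
  and chain_length: "2 \<le> length L"
  and chain_step: "k < length L - 2 \<Longrightarrow> L!(k+2) = L!k + (m+1) \<or> L!(k+2) = L!k + (m+2)"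
  and chain_end: "L!(length L - 2) = n + 1" "L!(length L - 1) = n + 2"
  using chain unfolding is_chain_def by auto

lemma chain_distinct: "distinct L"
  using chain_sorted strict_sorted_iff by blast

lemma chain_nth_mono: "j < length L \<Longrightarrow> k < length L \<Longrightarrow> j \<le> k \<Longrightarrow> L!j \<le> L!k"
  using chain_sorted by (simp add: sorted_nth_mono strict_sorted_iff)

lemma chain_nth_range: "k < length L - 2 \<Longrightarrow> L!k \<in> {1..n}"
  using chain_sorted chain_length chain_end(1) chain_start(1) chain_nth_mono[of 0 k]
    sorted_wrt_nth_less[of "(<)" L k "length L - 2"] by fastforce

lemma chain_index:
  assumes "i \<in> set L" "i \<le> n"
  obtains k where "k < length L - 2" "L!k = i"
proof -
  obtain k where k: "k < length L" "L!k = i"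
    using assms(1) by (metis in_set_conv_nth)
  moreover have "k < length L - 2"
    using chain_nth_mono[of "length L - 2" k] k assms(2) chain_end(1) by fastforce
  ultimately show ?thesis using that by blast
qed

lemma start_in_chain: "1 \<in> set L" "2 \<in> set L"
proof -
  have "0 < length L" "1 < length L"
    using chain_length by auto
  then show "1 \<in> set L" "2 \<in> set L"
    using chain_start nth_mem by metis+
qed

lemma chain_perm_nth:
  assumes "k < length L - 2"
  shows "chain_perm n L (L!k) + 2 = L!(k+2)"
proof -
  have "L!1 < L!(k+2)"
    using assms chain_sorted sorted_wrt_nth_less[of "(<)" L 1 "k+2"] by simp
  then show ?thesis
    using assms chain_nth_range[OF assms] skip_two_nth[OF chain_distinct assms] chain_start
    by (simp add: chain_perm_def)
qed

lemma chain_perm_notin_chain: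
  assumes "i \<in> {1..n}" "i \<notin> set L"
  shows "chain_perm n L i + 2 = i"
proof -
  have "i \<noteq> 1" "i \<noteq> 2" using assms(2) start_in_chain by auto
  then have "3 \<le> i" using assms(1) by auto
  then show ?thesis
    using assms skip_two_notin[OF assms(2)] by (simp add: chain_perm_def)
qed

lemma chain_perm_in_chain:
  assumes "i \<in> {1..n}" "i \<in> set L"
  obtains k where "k < length L - 2" "L!k = i" "chain_perm n L i + 2 = L!(k+2)"
proof -
  obtain k where "k < length L - 2" "L!k = i"
    using chain_index assms by auto
  then show ?thesis using that chain_perm_nth by blast
qed

lemma chain_perm_step:
  assumes "i \<in> {1..n}"
  shows "chain_perm n L i + 2 \<in> {i, i + (m+1), i + (m+2)}"
proof (cases "i \<in> set L")
  case True
  then show ?thesis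
    using chain_perm_in_chain[OF assms] chain_step by (metis insertCI)
next
  case False
  then show ?thesis using chain_perm_notin_chain[OF assms] by simp
qed

lemma chain_perm_range:
  assumes "i \<in> {1..n}"
  shows "chain_perm n L i \<in> {1..n}"
proof (cases "i \<in> set L")
  case True
  then obtain k where k: "k < length L - 2" "L!k = i" "chain_perm n L i + 2 = L!(k+2)"
    using chain_perm_in_chain[OF assms] by blast
  have "L!(k+2) \<le> n + 2"
    using k(1) chain_end(2) chain_nth_mono[of "k+2" "length L - 1"] by simp
  moreover have "i + (m+1) \<le> L!(k+2)"
    using chain_step[OF k(1)] k(2) by auto
  ultimately show ?thesis
    using k(3) assms m_pos by auto
next
  case False
  then have "i \<noteq> 1" "i \<noteq> 2" using start_in_chain by auto
  then show ?thesis using chain_perm_notin_chain[OF assms False] assms by auto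
qed

lemma inj_on_chain_perm: "inj_on (chain_perm n L) {1..n}"
proof (rule inj_onI)
  fix i j
  assume i: "i \<in> {1..n}" and j: "j \<in> {1..n}" and eq: "chain_perm n L i = chain_perm n L j"
  have shift_in_chain: "chain_perm n L v + 2 \<in> set L \<longleftrightarrow> v \<in> set L" if v: "v \<in> {1..n}" for v
  proof (cases "v \<in> set L")
    case True
    then obtain k where "k < length L - 2" "chain_perm n L v + 2 = L!(k+2)"
      using chain_perm_in_chain[OF v] by blast
    then show ?thesis using True by simp
  next
    case False
    then show ?thesis using chain_perm_notin_chain[OF v] by simp
  qed
  show "i = j"
  proof (cases "i \<in> set L")
    case True
    then have "j \<in> set L" using shift_in_chain i j eq by metis
    then obtain k' where "k' < length L - 2" "L!k' = j" "chain_perm n L j + 2 = L!(k'+2)"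
      using chain_perm_in_chain[OF j] by blast
    moreover obtain k where "k < length L - 2" "L!k = i" "chain_perm n L i + 2 = L!(k+2)"
      using chain_perm_in_chain[OF i True] by blast
    ultimately show ?thesis
      using eq chain_distinct by (simp add: nth_eq_iff_index_eq)
  next
    case False
    then have "j \<notin> set L" using shift_in_chain i j eq by metis
    then show ?thesis using False chain_perm_notin_chain i j eq by metis
  qed
qed

lemma chain_perm_mem_displacement_perms:
  "chain_perm n L \<in> displacement_perms {-2, int m - 1, int m} n"
proof -
  have "chain_perm n L permutes {1..n}"
    by (rule inj_imp_permutes[OF inj_on_chain_perm _ chain_perm_range])
      (auto simp: chain_perm_def)
  moreover have "int (chain_perm n L i) - int i \<in> {-2, int m - 1, int m}" if "i \<in> {1..n}" for i
    using chain_perm_step[OF that] by auto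
  ultimately show ?thesis
    unfolding displacement_perms_def by blast
qed

lemma chain_split: "L = take (length L - 2) L @ [n + 1, n + 2]"
proof -
  have last: "drop (length L - 1) L = [L!(length L - 1)]"
    using chain_length Cons_nth_drop_Suc[of "length L - 1" L] by simp
  have "Suc (length L - 2) = length L - 1"
    using chain_length by arith
  then have "drop (length L - 2) L = L!(length L - 2) # drop (length L - 1) L"
    using chain_length Cons_nth_drop_Suc[of "length L - 2" L] by simp
  then show ?thesis
    using last chain_end append_take_drop_id[of "length L - 2" L] by simp
qed

lemma advancing_chain_perm: "advancing n (chain_perm n L) = set (take (length L - 2) L)"
proof (intro set_eqI iffI)
  fix i assume "i \<in> advancing n (chain_perm n L)"
  then have i: "i \<in> {1..n}" "chain_perm n L i + 2 \<noteq> i"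
    by (auto simp: advancing_def)
  then have "i \<in> set L"
    using chain_perm_notin_chain by blast
  then obtain k where "k < length L - 2" "L!k = i"
    using chain_index i(1) by auto
  then show "i \<in> set (take (length L - 2) L)"
    by (auto simp: in_set_conv_nth)
next
  fix i assume "i \<in> set (take (length L - 2) L)"
  then obtain k where k: "k < length L - 2" "L!k = i"
    by (auto simp: in_set_conv_nth)
  then have "L!k < L!(k+2)"
    using chain_sorted sorted_wrt_nth_less[of "(<)" L k "k+2"] by simp
  then show "i \<in> advancing n (chain_perm n L)"
    using k chain_nth_range chain_perm_nth by (auto simp: advancing_def)
qed

lemma perm_chain_chain_perm: "perm_chain n (chain_perm n L) = L"
proof -
  have "sorted_wrt (<) (take (length L - 2) L)"
    using chain_sorted by (rule sorted_wrt_take)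
  then have "sorted_list_of_set (set (take (length L - 2) L)) = take (length L - 2) L"
    by (simp add: sorted_list_of_set_sort_remdups distinct_remdups_id sorted_sort_id
        strict_sorted_iff)
  then show ?thesis
    using chain_split by (simp add: perm_chain_def advancing_chain_perm)
qed

end

context
  fixes m n :: nat and \<pi> :: "nat \<Rightarrow> nat"
  assumes perm: "\<pi> \<in> displacement_perms {-2, int m - 1, int m} n"
begin

lemma perm_permutes: "\<pi> permutes {1..n}"
  using perm by (simp add: displacement_perms_def)

lemma perm_step:
  assumes "i \<in> {1..n}"
  shows "\<pi> i + 2 = i \<or> \<pi> i + 2 = i + (m+1) \<or> \<pi> i + 2 = i + (m+2)"
proof -
  have "int (\<pi> i) - int i \<in> {-2, int m - 1, int m}"
    using perm assms by (simp add: displacement_perms_def)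
  then show ?thesis by auto
qed

lemma perm_range: "i \<in> {1..n} \<Longrightarrow> \<pi> i \<in> {1..n}"
  using permutes_in_image[OF perm_permutes] by simp

lemma advancing_step: "u \<in> advancing n \<pi> \<Longrightarrow> \<pi> u + 2 = u + (m+1) \<or> \<pi> u + 2 = u + (m+2)"
  using perm_step by (auto simp: advancing_def)

lemma strict_mono_on_advancing: "strict_mono_on (advancing n \<pi>) (\<lambda>u. \<pi> u + 2)"
proof (rule strict_mono_onI)
  fix u v assume u: "u \<in> advancing n \<pi>" and v: "v \<in> advancing n \<pi>" and "u < v"
  have "\<pi> u \<noteq> \<pi> v"
    using permutes_inj[OF perm_permutes] \<open>u < v\<close> by (auto dest: injD)
  then show "\<pi> u + 2 < \<pi> v + 2"
    using advancing_step[OF u] advancing_step[OF v] \<open>u < v\<close> by auto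
qed

lemma image_advancing: "(\<lambda>u. \<pi> u + 2) ` advancing n \<pi> = {3..n+2} - ({1..n} - advancing n \<pi>)"
proof (intro set_eqI iffI)
  fix w assume "w \<in> (\<lambda>u. \<pi> u + 2) ` advancing n \<pi>"
  then obtain u where u: "u \<in> advancing n \<pi>" "w = \<pi> u + 2" by blast
  then have "\<pi> u \<in> {1..n}"
    using perm_range by (simp add: advancing_def)
  moreover have "w \<notin> {1..n} - advancing n \<pi>"
  proof
    assume "w \<in> {1..n} - advancing n \<pi>"
    then have "\<pi> w = \<pi> u"
      using u by (simp add: advancing_def)
    then have "w = u"
      using permutes_inj[OF perm_permutes] by (simp add: inj_eq)
    then show False
      using u \<open>w \<in> {1..n} - advancing n \<pi>\<close> by simp
  qed
  ultimately show "w \<in> {3..n+2} - ({1..n} - advancing n \<pi>)"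
    using u by auto
next
  fix w assume w: "w \<in> {3..n+2} - ({1..n} - advancing n \<pi>)"
  then have "w - 2 \<in> {1..n}" by auto
  then have "w - 2 \<in> \<pi> ` {1..n}"
    using permutes_image[OF perm_permutes] by simp
  then obtain j where j: "j \<in> {1..n}" "\<pi> j = w - 2" by (metis imageE)
  have "j \<in> advancing n \<pi>"
  proof (rule ccontr)
    assume "j \<notin> advancing n \<pi>"
    then have "j = w" using j w by (auto simp: advancing_def)
    then show False using j w \<open>j \<notin> advancing n \<pi>\<close> by simp
  qed
  moreover have "w = \<pi> j + 2" using j w by auto
  ultimately show "w \<in> (\<lambda>u. \<pi> u + 2) ` advancing n \<pi>" by blast
qed

lemma start_advancing: "i \<in> {1, 2} \<Longrightarrow> i \<le> n \<Longrightarrow> i \<in> advancing n \<pi>"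
  using perm_range[of i] by (auto simp: advancing_def)

lemma perm_chain_eq:
  "1 # 2 # map (\<lambda>u. \<pi> u + 2) (sorted_list_of_set (advancing n \<pi>)) = perm_chain n \<pi>"
  (is "?shifted = _")
proof -
  let ?U = "advancing n \<pi>"
  have fin: "finite ?U" and sub: "?U \<subseteq> {1..n}"
    by (auto simp: advancing_def)
  have "sorted_wrt (<) (map (\<lambda>u. \<pi> u + 2) (sorted_list_of_set ?U))"
    using strict_mono_on_advancing fin
    by (auto simp: sorted_wrt_map strict_mono_on_def
        intro: sorted_wrt_mono_rel[OF _ strict_sorted_list_of_set])
  moreover have "\<pi> u \<ge> 1" if "u \<in> ?U" for u
    using that sub perm_range by fastforce
  ultimately have "sorted_wrt (<) ?shifted"
    using fin by fastforce
  moreover note sorted_perm_chain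
  moreover have "set (perm_chain n \<pi>) = set ?shifted"
    using image_advancing fin sub start_advancing by (auto simp: perm_chain_def)
  ultimately show ?thesis
    by (simp add: strict_sorted_equal)
qed

lemma nth_perm_chain_step:
  assumes "k < length (perm_chain n \<pi>) - 2"
  shows "perm_chain n \<pi> ! (k+2) = \<pi> (perm_chain n \<pi> ! k) + 2"
    and "perm_chain n \<pi> ! k \<in> advancing n \<pi>"
proof -
  let ?su = "sorted_list_of_set (advancing n \<pi>)"
  have k: "k < length ?su"
    using assms by (simp add: perm_chain_def)
  then have "perm_chain n \<pi> ! k = ?su ! k"
    by (simp add: perm_chain_def nth_append)
  moreover have "perm_chain n \<pi> ! (k+2) = \<pi> (?su ! k) + 2"
    using k perm_chain_eq by (metis add_2_eq_Suc' nth_Cons_Suc nth_map)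
  moreover have "?su ! k \<in> advancing n \<pi>"
    using k by (metis nth_mem set_sorted_list_of_set finite_advancing)
  ultimately show "perm_chain n \<pi> ! (k+2) = \<pi> (perm_chain n \<pi> ! k) + 2"
    and "perm_chain n \<pi> ! k \<in> advancing n \<pi>"
    by simp_all
qed

lemma is_chain_perm_chain: "is_chain (m+1) (m+2) (n+1) (perm_chain n \<pi>)"
  unfolding is_chain_def
proof (intro conjI allI impI)
  show "sorted_wrt (<) (perm_chain n \<pi>)"
    by (rule sorted_perm_chain)
  fix k assume "k < length (perm_chain n \<pi>) - 2"
  then show "perm_chain n \<pi> ! (k+2) = perm_chain n \<pi> ! k + (m+1)
      \<or> perm_chain n \<pi> ! (k+2) = perm_chain n \<pi> ! k + (m+2)"
    using nth_perm_chain_step advancing_step by metis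
qed (simp_all add: perm_chain_def nth_append)

lemma perm_chain_start: "perm_chain n \<pi> = 1 # 2 # drop 2 (perm_chain n \<pi>)"
  by (metis perm_chain_eq drop_Suc_Cons drop_0 numeral_2_eq_2)

lemma chain_perm_perm_chain: "chain_perm n (perm_chain n \<pi>) = \<pi>"
proof
  fix i
  show "chain_perm n (perm_chain n \<pi>) i = \<pi> i"
  proof (cases "i \<in> {1..n}")
    case False
    then show ?thesis
      using permutes_not_in[OF perm_permutes False]
      unfolding chain_perm_def if_not_P[OF False] by simp
  next
    case True
    show ?thesis
    proof (cases "i \<in> advancing n \<pi>")
      case adv: True
      then have "i \<in> set (sorted_list_of_set (advancing n \<pi>))"
        using finite_advancing by simp
      then obtain k where "k < length (sorted_list_of_set (advancing n \<pi>))"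
        "sorted_list_of_set (advancing n \<pi>) ! k = i"
        by (auto simp: in_set_conv_nth)
      then have k: "k < length (perm_chain n \<pi>) - 2" "perm_chain n \<pi> ! k = i"
        by (simp_all add: perm_chain_def nth_append)
      have "distinct (perm_chain n \<pi>)"
        using sorted_perm_chain strict_sorted_iff by blast
      then show ?thesis
        using True k skip_two_nth nth_perm_chain_step(1)[OF k(1)]
        by (fastforce simp: chain_perm_def)
    next
      case False
      then have "i \<notin> set (perm_chain n \<pi>)" "\<pi> i + 2 = i"
        using True by (auto simp: perm_chain_def advancing_def finite_advancing)
      then show ?thesis
        using True skip_two_notin by (simp add: chain_perm_def)
    qed
  qed
qed

end

lemma Pperm_eq_chain_count:
  assumes "1 \<le> m"
  shows "Pperm {-2, int m - 1, int m} n = chain_count (m+1) (m+2) 1 2 (n+1)"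
proof -
  let ?tails = "chain_tails (m+1) (m+2) 1 2 (n+1)"
  let ?perms = "displacement_perms {-2, int m - 1, int m} n"
  have "bij_betw (\<lambda>r. chain_perm n (1 # 2 # r)) ?tails ?perms"
  proof (rule bij_betw_byWitness[where f' = "\<lambda>\<pi>. drop 2 (perm_chain n \<pi>)"])
    show "\<forall>r\<in>?tails. drop 2 (perm_chain n (chain_perm n (1 # 2 # r))) = r"
      using perm_chain_chain_perm[OF assms] by (simp add: chain_tails_def)
    show "\<forall>\<pi>\<in>?perms. chain_perm n (1 # 2 # drop 2 (perm_chain n \<pi>)) = \<pi>"
      using perm_chain_start chain_perm_perm_chain by metis
    show "(\<lambda>r. chain_perm n (1 # 2 # r)) ` ?tails \<subseteq> ?perms"
      using chain_perm_mem_displacement_perms[OF assms] by (auto simp: chain_tails_def)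
    show "(\<lambda>\<pi>. drop 2 (perm_chain n \<pi>)) ` ?perms \<subseteq> ?tails"
      using is_chain_perm_chain perm_chain_start
      by (auto simp: chain_tails_def)
  qed
  then have "card ?perms = card ?tails"
    by (simp add: bij_betw_same_card)
  then show ?thesis
    by (simp add: Pperm_def displacement_perms_def card_chain_tails)
qed

lemma chain_count_eq_Pperm:
  assumes "1 \<le> m"
  shows "chain_count (m+1) (m+2) (m+1) (m+2) T =
    (if m + 1 \<le> T then Pperm {-2, int m - 1, int m} (T - (m+1)) else 0)"
proof (cases "m + 1 \<le> T")
  case True
  have "chain_count (m+1) (m+2) (1 + m) (2 + m) ((T - (m+1) + 1) + m)
      = chain_count (m+1) (m+2) 1 2 (T - (m+1) + 1)"
    by (rule chain_count_shift)
  moreover have "T - (m+1) + 1 + m = T" using True by simp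
  ultimately show ?thesis
    using True Pperm_eq_chain_count[OF assms] by (simp add: add.commute)
qed (simp add: chain_count_eq_0)

lemma sum_chain_count_eq_sum_Pperm:
  fixes m n :: nat
  assumes "1 \<le> m"
  shows "(\<Sum>T\<le>n. chain_count (m+1) (m+2) (m+1) (m+2) T
            * (sseq (m+1) (m+2) (int n - int (T + (m+2))))^2) =
    (\<Sum>l = 2*m+3..n. Pperm {-2, int m - 1, int m} (l - (2*m+3))
                        * (sseq (m+1) (m+2) (int n - int l))^2)"
proof -
  define h where
    "h l = Pperm {-2, int m - 1, int m} (l - (2*m+3)) * (sseq (m+1) (m+2) (int n - int l))^2" for l
  have "(\<Sum>T\<le>n. chain_count (m+1) (m+2) (m+1) (m+2) T
            * (sseq (m+1) (m+2) (int n - int (T + (m+2))))^2)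
      = (\<Sum>T\<le>n. if m + 1 \<le> T then h (T + (m+2)) else 0)"
    using chain_count_eq_Pperm[OF assms] by (intro sum.cong) (auto simp: h_def)
  also have "\<dots> = (\<Sum>T = m+1..n. h (T + (m+2)))"
    by (rule sum.mono_neutral_cong_right) auto
  also have "\<dots> = (\<Sum>l = 2*m+3..n+(m+2). h l)"
  proof -
    have "2*m+3 = m+1+(m+2)" by simp
    then show ?thesis by (simp only: sum.shift_bounds_cl_nat_ivl)
  qed
  also have "\<dots> = (\<Sum>l = 2*m+3..n. h l)"
    by (rule sum.mono_neutral_right) (auto simp: h_def sseq_negative)
  finally show ?thesis
    unfolding h_def .
qed

theorem mainTheorem10:
  fixes m n :: nat
  assumes "m \<ge> 1"
  shows "(sseq (m+1) (m+2) (int n))^2 =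
    (if n = 0 then 1 else 0)
    + (sseq (m+1) (m+2) (int n - int m - 1))^2
    + (sseq (m+1) (m+2) (int n - int m - 2))^2
    + 2 * (\<Sum>l = 2*m+3..n. Pperm {-2, int m - 1, int m} (l - (2*m+3))
                             * (sseq (m+1) (m+2) (int n - int l))^2)"
proof -
  have "sseq (m+1) (m+2) (int n - int (m+1)) * sseq (m+1) (m+2) (int n - int (m+2)) =
      (\<Sum>T\<le>n. chain_count (m+1) (m+2) (m+1) (m+2) T
              * (sseq (m+1) (m+2) (int n - int (T + (m+2))))^2)"
    using sseq_product_expansion[of "m+1" "m+1" "m+2" n] assms by simp
  also have "\<dots> = (\<Sum>l = 2*m+3..n. Pperm {-2, int m - 1, int m} (l - (2*m+3))
                                  * (sseq (m+1) (m+2) (int n - int l))^2)"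
    by (rule sum_chain_count_eq_sum_Pperm[OF assms])
  finally show ?thesis
    using sseq_square_unfold[of "m+1" "m+2" n] by (simp add: algebra_simps)
qed

end
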